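(* Let $\bm v_1,\dots,\bm v_N\in\mathbb{S}^{r-1}$ form a unit norm tight frame, let $\bm V\in\mathbb{R}^{r\times N}$ have the $\bm v_i$ as columns, $\bm X := \bm V^\top\bm V$, and suppose the matrices $\bm v_1\bm v_1^\top,\dots,\bm v_N\bm v_N^\top$ are linearly independent (equivalently, $\bm X^{\odot 2}$ is nonsingular). Let $$V'_{\mathrm{sym}} := \{\mathrm{vec}(\bm S\bm V):\bm S\in\mathbb{R}^{r\times r}_{\mathrm{sym}},\ \bm v_i^\top\bm S\bm v_i = 0\ \forall i\in[N]\}.$$ Then the orthogonal projection matrix $\bm P_{V'_{\mathrm{sym}}}\in\mathbb{R}^{rN\times rN}$ has blocks $$(\bm P_{V'_{\mathrm{sym}}})_{[ij]} = \frac{r}{N}\Big(\tfrac12\langle\bm v_i,\bm v_j\rangle\bm I_r + \tfrac12\bm v_j\bm v_i^\top - \sum_{k=1}^N\sum_{\ell=1}^N\big((\bm X^{\odot2})^{-1}\big)_{k\ell}\langle\bm v_i,\bm v_k\rangle\langle\bm v_j,\bm v_\ell\rangle\bm v_k\bm v_\ell^\top\Big).$$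
   Context: Unit vectors $\bm v_1,\dots,\bm v_N\in\mathbb{R}^r$ form a unit norm tight frame if $\sum_i\bm v_i\bm v_i^\top = \frac{N}{r}\bm I_r$. $\mathrm{vec}(\bm V) = (\bm v_1;\dots;\bm v_N)\in\mathbb{R}^{rN}$. $\bm X^{\odot 2}$ is the entrywise square of $\bm X$. Matrices in $\mathbb{R}^{rN\times rN}$ are viewed as $N\times N$ arrays of $r\times r$ blocks, $(i,j)$ block written $(\cdot)_{[ij]}$. *)

theory Defs
  imports "HOL-Analysis.Analysis"
begin

definition outer :: "real^'r \<Rightarrow> real^'r \<Rightarrow> real^'r^'r" where
  "outer u w = (\<chi> a b. u $ a * w $ b)"

text \<open>Vectors in R^{rN} are represented as elements of real^'r^'n (N blocks of size r);
  the Euclidean inner product on this type is the standard one on R^{rN}.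
  An rN x rN matrix given by its r x r blocks B i j acts by
  (B x)_i = sum_j B_[ij] x_j.\<close>
definition block_apply :: "('n::finite \<Rightarrow> 'n \<Rightarrow> real^'r^'r) \<Rightarrow> real^'r^'n \<Rightarrow> real^'r^'n" where
  "block_apply B x = (\<chi> i. \<Sum>j\<in>UNIV. B i j *v (x $ j))"

definition is_orthogonal_projection :: "('a::real_inner \<Rightarrow> 'a) \<Rightarrow> 'a set \<Rightarrow> bool" where
  "is_orthogonal_projection P W \<longleftrightarrow> (\<forall>x. P x \<in> W \<and> (\<forall>w\<in>W. inner (x - P x) w = 0))"

definition vecSV :: "real^'r^'r \<Rightarrow> ('n::finite \<Rightarrow> real^'r) \<Rightarrow> real^'r^'n" where
  "vecSV S v = (\<chi> i. S *v v i)"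

definition Vsym' :: "('n::finite \<Rightarrow> real^'r) \<Rightarrow> (real^'r^'n) set" where
  "Vsym' v = {vecSV S v | S. transpose S = S \<and> (\<forall>i. v i \<bullet> (S *v v i) = 0)}"

end

theory Submission
  imports Defs
begin

text \<open>
  Let \<open>M = X V\<^sup>T\<close> be the matrix obtained from \<open>x\<close>, and look for \<open>P x = vec(S V)\<close> with
  \<open>S = (r/N)(sym M - \<Sum>\<^sub>k d\<^sub>k v\<^sub>k v\<^sub>k\<^sup>T)\<close>. Tightness \<open>V V\<^sup>T = (N/r) I\<close> turns the inner product of
  \<open>vec(S V)\<close> and \<open>vec(T V)\<close> into \<open>(N/r)\<langle>S, T\<rangle>\<close>, while \<open>\<langle>x, vec(T V)\<rangle> = \<langle>M, T\<rangle>\<close>.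
  For symmetric \<open>T\<close> with \<open>v\<^sub>k\<^sup>T T v\<^sub>k = 0\<close> the correction terms pair to zero with \<open>T\<close>,
  so \<open>x - vec(S V)\<close> is orthogonal to \<open>V'\<^sub>s\<^sub>y\<^sub>m\<close> whatever \<open>d\<close> is. The constraints
  \<open>v\<^sub>i\<^sup>T S v\<^sub>i = 0\<close> then read \<open>X\<^sup>\<odot>\<^sup>2 d = (v\<^sub>i\<^sup>T M v\<^sub>i)\<^sub>i\<close>, solved by the inverse of
  \<open>X\<^sup>\<odot>\<^sup>2\<close>, which is the Gram matrix of the independent \<open>v\<^sub>i v\<^sub>i\<^sup>T\<close> in the Frobenius inner
  product. Expanding \<open>S v\<^sub>i\<close> gives the stated blocks.
\<close>

lemma outer_mult_vec: "outer u w *v y = (w \<bullet> y) *\<^sub>R u"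
  by (simp add: outer_def vec_eq_iff matrix_vector_mult_def inner_vec_def sum_distrib_left mult_ac)

lemma inner_outer_left: "outer u w \<bullet> A = u \<bullet> (A *v w)"
  by (simp add: outer_def inner_vec_def matrix_vector_mult_def sum_distrib_left mult_ac)

lemma sum_matrix_vector_mult:
  "finite K \<Longrightarrow> (\<Sum>k\<in>K. f k) *v (y::real^'b) = (\<Sum>k\<in>K. f k *v y)"
  by (induction K rule: finite_induct) (auto simp: matrix_vector_mult_add_rdistrib)

lemma scaleR_matrix_vector_mult: "(c *\<^sub>R (A::real^'b^'a)) *v y = c *\<^sub>R (A *v y)"
  by (simp add: vec_eq_iff matrix_vector_mult_def sum_distrib_left mult_ac)

lemma inner_transpose_symmetric:
  fixes A T :: "real^'a^'a"
  assumes "transpose T = T"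
  shows "transpose A \<bullet> T = A \<bullet> T"
proof -
  have "transpose A \<bullet> T = transpose A \<bullet> transpose T" using assms by simp
  also have "\<dots> = A \<bullet> T"
    by (simp add: inner_vec_def transpose_def) (rule sum.swap)
  finally show ?thesis .
qed

lemma matrix_mul_matrix_inv:
  fixes A :: "'a::field^'n^'n"
  assumes "invertible A"
  shows "A ** matrix_inv A = mat 1"
  using assms unfolding matrix_inv_def invertible_def by (rule someI2_ex) auto

lemma tight_frame_sum_inner:
  fixes v :: "'n::finite \<Rightarrow> real^'r"
  assumes tight: "(\<Sum>i\<in>UNIV. outer (v i) (v i)) = c *\<^sub>R mat 1"
  shows "(\<Sum>i\<in>UNIV. (a \<bullet> v i) * (b \<bullet> v i)) = c * (a \<bullet> b)"
proof -
  have "(\<Sum>i\<in>UNIV. (v i \<bullet> b) *\<^sub>R v i) = (\<Sum>i\<in>UNIV. outer (v i) (v i)) *v b"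
    by (simp add: sum_matrix_vector_mult outer_mult_vec)
  also have "\<dots> = c *\<^sub>R b"
    using tight by (simp add: scaleR_matrix_vector_mult)
  finally have "a \<bullet> (\<Sum>i\<in>UNIV. (v i \<bullet> b) *\<^sub>R v i) = c * (a \<bullet> b)" by simp
  then show ?thesis by (simp add: inner_sum_right inner_commute mult.commute)
qed

lemma inner_vecSV_vecSV:
  fixes v :: "'n::finite \<Rightarrow> real^'r"
  assumes tight: "(\<Sum>i\<in>UNIV. outer (v i) (v i)) = c *\<^sub>R mat 1"
  shows "vecSV S v \<bullet> vecSV T v = c * (S \<bullet> T)"
proof -
  have rows: "(S *v y) \<bullet> (T *v y) = (\<Sum>a\<in>UNIV. (S $ a \<bullet> y) * (T $ a \<bullet> y))" for y
    by (subst inner_vec_def) (simp add: matrix_vector_mul_component)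
  have "vecSV S v \<bullet> vecSV T v = (\<Sum>i\<in>UNIV. \<Sum>a\<in>UNIV. (S $ a \<bullet> v i) * (T $ a \<bullet> v i))"
    unfolding inner_vec_def[where x = "vecSV S v"] by (simp add: vecSV_def rows)
  also have "\<dots> = (\<Sum>a\<in>UNIV. \<Sum>i\<in>UNIV. (S $ a \<bullet> v i) * (T $ a \<bullet> v i))"
    by (rule sum.swap)
  also have "\<dots> = c * (S \<bullet> T)"
    by (simp add: tight_frame_sum_inner[OF tight] inner_vec_def[of S] sum_distrib_left)
  finally show ?thesis .
qed

text \<open>\<open>frame_cross x v\<close> is \<open>X V\<^sup>T\<close>, where \<open>X\<close> has the blocks \<open>x $ j\<close> as columns.\<close>

definition frame_cross :: "real^'r^'n \<Rightarrow> ('n::finite \<Rightarrow> real^'r) \<Rightarrow> real^'r^'r" where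
  "frame_cross x v = (\<Sum>j\<in>UNIV. outer (x $ j) (v j))"

lemma inner_vecSV_right: "x \<bullet> vecSV T v = frame_cross x v \<bullet> T"
  by (simp add: frame_cross_def inner_sum_left inner_outer_left inner_vec_def[where x = x] vecSV_def)

lemma transpose_frame_cross: "transpose (frame_cross x v) = (\<Sum>j\<in>UNIV. outer (v j) (x $ j))"
  by (simp add: frame_cross_def transpose_def outer_def vec_eq_iff mult.commute)

definition gram_square :: "('n::finite \<Rightarrow> real^'r) \<Rightarrow> real^'n^'n" where
  "gram_square v = (\<chi> a b. (v a \<bullet> v b)^2)"

lemma invertible_gram_square:
  fixes v :: "'n::finite \<Rightarrow> real^'r"
  assumes indep: "\<forall>c :: 'n \<Rightarrow> real. (\<Sum>i\<in>UNIV. c i *\<^sub>R outer (v i) (v i)) = 0 \<longrightarrow> (\<forall>i. c i = 0)"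
  shows "invertible (gram_square v)"
proof -
  have "z = 0" if Gz: "gram_square v *v z = 0" for z
  proof -
    define Q where "Q = (\<Sum>k\<in>UNIV. z $ k *\<^sub>R outer (v k) (v k))"
    have "outer (v k) (v k) \<bullet> outer (v l) (v l) = (v k \<bullet> v l)^2" for k l
      by (simp add: inner_outer_left outer_mult_vec power2_eq_square inner_commute)
    then have "Q \<bullet> Q = (\<Sum>k\<in>UNIV. z $ k * (gram_square v *v z) $ k)"
      by (simp add: Q_def inner_sum_left inner_sum_right gram_square_def matrix_vector_mult_def
          sum_distrib_left inner_commute mult_ac)
    then have "Q = 0" using Gz by simp
    then show "z = 0" using indep by (simp add: Q_def vec_eq_iff)
  qed
  then show ?thesis
    using matrix_left_invertible_ker invertible_left_inverse by blast
qed

definition proj_factor :: "('n::finite \<Rightarrow> real^'r) \<Rightarrow> real^'n \<Rightarrow> real^'r^'n \<Rightarrow> real^'r^'r" where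
  "proj_factor v d x = (1/2) *\<^sub>R (frame_cross x v + transpose (frame_cross x v))
     - (\<Sum>k\<in>UNIV. d $ k *\<^sub>R outer (v k) (v k))"

lemma transpose_proj_factor: "transpose (proj_factor v d x) = proj_factor v d x"
  by (simp add: proj_factor_def transpose_def vec_eq_iff outer_def mult.commute add.commute)

lemma proj_factor_mult_vec:
  "proj_factor v d x *v y = (1/2) *\<^sub>R (\<Sum>j\<in>UNIV. (v j \<bullet> y) *\<^sub>R x $ j + (x $ j \<bullet> y) *\<^sub>R v j)
     - (\<Sum>k\<in>UNIV. (d $ k * (v k \<bullet> y)) *\<^sub>R v k)"
  by (simp add: proj_factor_def transpose_frame_cross matrix_vector_mult_diff_rdistrib
      scaleR_matrix_vector_mult matrix_vector_mult_add_rdistrib sum_matrix_vector_mult)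
     (simp add: frame_cross_def sum_matrix_vector_mult outer_mult_vec sum.distrib)

lemma inner_proj_factor_diag:
  assumes "gram_square v *v d = (\<chi> l. v l \<bullet> (frame_cross x v *v v l))"
  shows "v i \<bullet> (proj_factor v d x *v v i) = 0"
proof -
  have "(gram_square v *v d) $ i = (\<Sum>k\<in>UNIV. (v i \<bullet> v k)^2 * d $ k)"
    by (simp add: gram_square_def matrix_vector_mult_def)
  then have "v i \<bullet> (proj_factor v d x *v v i) = v i \<bullet> (frame_cross x v *v v i) - (gram_square v *v d) $ i"
    by (simp add: proj_factor_mult_vec frame_cross_def sum_matrix_vector_mult outer_mult_vec
        inner_diff_right inner_add_right inner_sum_right
        sum.distrib power2_eq_square inner_commute mult_ac)
  then show ?thesis using assms by simp
qed

lemma proj_factor_orthogonal_Vsym':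
  fixes v :: "'n::finite \<Rightarrow> real^'r"
  assumes tight: "(\<Sum>i\<in>UNIV. outer (v i) (v i)) = c *\<^sub>R mat 1" and "c \<noteq> 0"
    and "w \<in> Vsym' v"
  shows "(x - vecSV ((1/c) *\<^sub>R proj_factor v d x) v) \<bullet> w = 0"
proof -
  obtain T where w: "w = vecSV T v" and T_sym: "transpose T = T"
    and T_diag: "\<forall>k. v k \<bullet> (T *v v k) = 0"
    using \<open>w \<in> Vsym' v\<close> unfolding Vsym'_def by blast
  have "vecSV ((1/c) *\<^sub>R proj_factor v d x) v \<bullet> w = proj_factor v d x \<bullet> T"
    using \<open>c \<noteq> 0\<close> by (simp add: w inner_vecSV_vecSV[OF tight])
  also have "\<dots> = frame_cross x v \<bullet> T"
    using T_diag by (simp add: proj_factor_def inner_diff_left inner_add_left inner_sum_left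
        inner_transpose_symmetric[OF T_sym] inner_outer_left)
  also have "\<dots> = x \<bullet> w"
    by (simp add: w inner_vecSV_right)
  finally show ?thesis by (simp add: inner_diff_left)
qed

lemma block_apply_eq_vecSV_proj_factor:
  fixes v :: "'n::finite \<Rightarrow> real^'r" and M :: "real^'n^'n"
  shows "block_apply (\<lambda>i j. s *\<^sub>R
             ((1/2 * (v i \<bullet> v j)) *\<^sub>R mat 1 + (1/2) *\<^sub>R outer (v j) (v i)
              - (\<Sum>k\<in>UNIV. \<Sum>l\<in>UNIV. (M $ k $ l * (v i \<bullet> v k) * (v j \<bullet> v l)) *\<^sub>R outer (v k) (v l)))) x
       = vecSV (s *\<^sub>R proj_factor v (M *v (\<chi> l. v l \<bullet> (frame_cross x v *v v l))) x) v"
    (is "block_apply ?B x = vecSV (s *\<^sub>R proj_factor v ?d x) v")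
proof -
  define c where "c = (\<chi> l. \<Sum>j\<in>UNIV. (v j \<bullet> v l) * (v l \<bullet> x $ j))"
  have c: "(\<chi> l. v l \<bullet> (frame_cross x v *v v l)) = c"
    by (simp add: c_def frame_cross_def sum_matrix_vector_mult outer_mult_vec inner_sum_right)
  define f where "f i j k l = M $ k $ l * (v i \<bullet> v k) * (v j \<bullet> v l) * (v l \<bullet> x $ j)" for i j k l
  have block: "?B i j *v x $ j = s *\<^sub>R ((1/2) *\<^sub>R ((v j \<bullet> v i) *\<^sub>R x $ j + (x $ j \<bullet> v i) *\<^sub>R v j)
      - (\<Sum>k\<in>UNIV. (\<Sum>l\<in>UNIV. f i j k l) *\<^sub>R v k))" for i j
    by (simp add: f_def scaleR_matrix_vector_mult sum_matrix_vector_mult outer_mult_vec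
        matrix_vector_mult_diff_rdistrib matrix_vector_mult_add_rdistrib scaleR_sum_left
        scaleR_right_distrib inner_commute)
  have correction: "(\<Sum>j\<in>UNIV. \<Sum>k\<in>UNIV. (\<Sum>l\<in>UNIV. f i j k l) *\<^sub>R v k)
      = (\<Sum>k\<in>UNIV. ((M *v c) $ k * (v k \<bullet> v i)) *\<^sub>R v k)" for i
  proof -
    have "(\<Sum>j\<in>UNIV. \<Sum>l\<in>UNIV. f i j k l) = (M *v c) $ k * (v k \<bullet> v i)" for k
      by (subst sum.swap) (simp add: f_def c_def matrix_vector_mult_def sum_distrib_left sum_distrib_right inner_commute mult_ac)
    then show ?thesis
      by (subst sum.swap) (simp add: scaleR_sum_left[symmetric])
  qed
  have "(\<Sum>j\<in>UNIV. ?B i j *v x $ j) = s *\<^sub>R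
      ((1/2) *\<^sub>R (\<Sum>j\<in>UNIV. (v j \<bullet> v i) *\<^sub>R x $ j + (x $ j \<bullet> v i) *\<^sub>R v j)
       - (\<Sum>j\<in>UNIV. \<Sum>k\<in>UNIV. (\<Sum>l\<in>UNIV. f i j k l) *\<^sub>R v k))" for i
    by (simp only: block scaleR_sum_right[symmetric] sum_subtractf)
  then show ?thesis
    by (simp add: c block_apply_def vecSV_def correction proj_factor_mult_vec scaleR_matrix_vector_mult)
qed

theorem proposition13:
  fixes v :: "'n::finite \<Rightarrow> real^'r"
  assumes unit: "\<forall>i. norm (v i) = 1"
    and tight: "(\<Sum>i\<in>UNIV. outer (v i) (v i)) = (real CARD('n) / real CARD('r)) *\<^sub>R mat 1"
    and indep: "\<forall>c :: 'n \<Rightarrow> real. (\<Sum>i\<in>UNIV. c i *\<^sub>R outer (v i) (v i)) = 0 \<longrightarrow> (\<forall>i. c i = 0)"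
  shows "is_orthogonal_projection
           (block_apply (\<lambda>i j.
              (real CARD('r) / real CARD('n)) *\<^sub>R
                ((1/2 * (v i \<bullet> v j)) *\<^sub>R mat 1 + (1/2) *\<^sub>R outer (v j) (v i)
                 - (\<Sum>k\<in>UNIV. \<Sum>l\<in>UNIV.
                      (matrix_inv (\<chi> a b. (v a \<bullet> v b)^2) $ k $ l * (v i \<bullet> v k) * (v j \<bullet> v l))
                        *\<^sub>R outer (v k) (v l)))))
           (Vsym' v)"
    (is "is_orthogonal_projection ?P _")
proof -
  let ?s = "real CARD('r) / real CARD('n)"
  define d where "d x = matrix_inv (gram_square v) *v (\<chi> l. v l \<bullet> (frame_cross x v *v v l))" for x
  have P: "?P x = vecSV (?s *\<^sub>R proj_factor v (d x) x) v" for x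
    using block_apply_eq_vecSV_proj_factor[where M = "matrix_inv (gram_square v)" and s = ?s]
    by (simp add: d_def gram_square_def)
  have inv: "gram_square v ** matrix_inv (gram_square v) = mat 1"
    using indep by (simp add: invertible_gram_square matrix_mul_matrix_inv)
  have diag: "v i \<bullet> (proj_factor v (d x) x *v v i) = 0" for i x
    by (rule inner_proj_factor_diag) (simp add: d_def matrix_vector_mul_assoc inv)
  show ?thesis
    unfolding is_orthogonal_projection_def
  proof (intro allI conjI ballI)
    fix x
    show "?P x \<in> Vsym' v"
      unfolding P Vsym'_def using diag by (auto simp: transpose_scalar transpose_proj_factor scaleR_matrix_vector_mult)
    show "(x - ?P x) \<bullet> w = 0" if "w \<in> Vsym' v" for w
      unfolding P using proj_factor_orthogonal_Vsym'[OF tight _ that] by simp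
  qed
qed

end
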